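(* Let $L\ge3$, assume $\min\{d_1,\dots,d_{L-1}\}\ge d_{\min}$, and suppose that for some $i\in[r_Y]$, $$\lambda=y_i^{2(L-1)}\Big(\big(\tfrac{L-2}L\big)^{\frac L{2(L-1)}}+\big(\tfrac L{L-2}\big)^{\frac{L-2}{2(L-1)}}\Big)^{-2(L-1)}.$$ Then there exists $\bm\sigma^*\in\mathcal A$ such that there do not exist constants $\epsilon,\kappa>0$ with $\mathrm{dist}(\bm W,\widehat{\mathcal W}_{\bm\sigma^*})\le\kappa\|\nabla G(\bm W)\|_F$ for all $\bm W$ satisfying $\mathrm{dist}(\bm W,\widehat{\mathcal W}_{\bm\sigma^*})\le\epsilon$.
   Context: Setting: $d_0,\dots,d_L$ positive integers, $d_{\min}=\min\{d_0,d_L\}$, $\lambda>0$, $\bm Y\in\mathbb R^{d_L\times d_0}$ diagonal with entries $y_1\ge\dots\ge y_{d_{\min}}\ge0$, $r_Y$ the number of positive $y_i$; $G(\bm W)=\|\bm W_L\cdots\bm W_1-\sqrt\lambda\bm Y\|_F^2+\lambda\sum_l\|\bm W_l\|_F^2$, $\bm W_l\in\mathbb R^{d_l\times d_{l-1}}$. $\mathcal A=\{\bm a\in\mathbb R^{d_{\min}}:a_i^{2L-1}-\sqrt\lambda y_ia_i^{L-1}+\lambda a_i=0,a_i\ge0\ \forall i\}$. For $\bm\sigma^*\in\mathcal A$, $\widehat{\mathcal W}_{\bm\sigma^*}:=\mathcal W_{\mathrm{sort}(\bm\sigma^* )}$, where $\mathrm{sort}$ arranges entries in nonincreasing order and, for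 nonincreasing $\bm\sigma=\bm\Pi\bm a$ with $\bm a\in\mathcal A$ and $\bm\Pi$ a permutation matrix, $\mathcal W_{\bm\sigma}$ is the set of tuples $\bm W_1=\bm Q_2\bm\Sigma_1\mathrm{BlkD}(\bm\Pi,\bm I)\mathrm{BlkD}(\bm O_1,\dots,\bm O_{p_Y+1})$, $\bm W_l=\bm Q_{l+1}\bm\Sigma_l\bm Q_l^T$ ($2\le l\le L-1$), $\bm W_L=\mathrm{BlkD}(\bm O_1^T,\dots,\bm O_{p_Y}^T,\widehat{\bm O}_{p_Y+1}^T)\mathrm{BlkD}(\bm\Pi^T,\bm I)\bm\Sigma_L\bm Q_L^T$, with $\bm\Sigma_l\in\mathbb R^{d_l\times d_{l-1}}$ having top-left block $\mathrm{diag}(\bm\sigma)$, zeros elsewhere, and $\bm Q_l\in\mathcal O^{d_{l-1}}$, $\bm O_k\in\mathcal O^{h_k}$ ($h_k$ the multiplicities of the $p_Y$ distinct positive $y$-values), $\bm O_{p_Y+1}\in\mathcal O^{d_0-r_Y}$, $\widehat{\bm O}_{p_Y+1}\in\mathcal O^{d_L-r_Y}$ arbitrary orthogonal. Distances and gradient norms are Frobenius norms on tuples. *)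

theory Defs
  imports "Jordan_Normal_Form.Matrix" "HOL-Combinatorics.Permutations" "HOL-Analysis.Derivative"
begin

(* Conventions: layer dimensions d :: nat => nat (d 0, ..., d L);
   tuples W :: nat => real mat with W l (1 <= l <= L) the l-th weight matrix;
   vectors in R^dmin are functions nat => real with indices 0 ..< dmin
   (paper index i corresponds to i-1 here). *)

definition dmin :: "(nat \<Rightarrow> nat) \<Rightarrow> nat \<Rightarrow> nat" where
  "dmin d L = min (d 0) (d L)"

definition Ymat :: "(nat \<Rightarrow> nat) \<Rightarrow> nat \<Rightarrow> (nat \<Rightarrow> real) \<Rightarrow> real mat" where
  "Ymat d L y = Matrix.mat (d L) (d 0) (\<lambda>(i,j). if i = j \<and> i < dmin d L then y i else 0)"

definition rY :: "(nat \<Rightarrow> nat) \<Rightarrow> nat \<Rightarrow> (nat \<Rightarrow> real) \<Rightarrow> nat" where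
  "rY d L y = card {i. i < dmin d L \<and> y i > 0}"

definition yvals :: "(nat \<Rightarrow> nat) \<Rightarrow> nat \<Rightarrow> (nat \<Rightarrow> real) \<Rightarrow> real list" where
  "yvals d L y = rev (sorted_list_of_set {y i | i. i < dmin d L \<and> y i > 0})"

definition pY :: "(nat \<Rightarrow> nat) \<Rightarrow> nat \<Rightarrow> (nat \<Rightarrow> real) \<Rightarrow> nat" where
  "pY d L y = length (yvals d L y)"

definition hmult :: "(nat \<Rightarrow> nat) \<Rightarrow> nat \<Rightarrow> (nat \<Rightarrow> real) \<Rightarrow> nat \<Rightarrow> nat" where
  "hmult d L y k = card {i. i < dmin d L \<and> y i = yvals d L y ! k}"

definition fro2 :: "real mat \<Rightarrow> real" where
  "fro2 A = (\<Sum>i<dim_row A. \<Sum>j<dim_col A. (A $$ (i,j))^2)"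

definition valid_tuple :: "(nat \<Rightarrow> nat) \<Rightarrow> nat \<Rightarrow> (nat \<Rightarrow> real mat) \<Rightarrow> bool" where
  "valid_tuple d L W = (\<forall>l\<in>{1..L}. W l \<in> carrier_mat (d l) (d (l - 1)))"

fun prodW :: "(nat \<Rightarrow> nat) \<Rightarrow> (nat \<Rightarrow> real mat) \<Rightarrow> nat \<Rightarrow> real mat" where
  "prodW d W 0 = 1\<^sub>m (d 0)"
| "prodW d W (Suc k) = W (Suc k) * prodW d W k"

definition Gobj :: "(nat \<Rightarrow> nat) \<Rightarrow> nat \<Rightarrow> real \<Rightarrow> (nat \<Rightarrow> real) \<Rightarrow> (nat \<Rightarrow> real mat) \<Rightarrow> real" where
  "Gobj d L lam y W = fro2 (prodW d W L - sqrt lam \<cdot>\<^sub>m Ymat d L y) + lam * (\<Sum>l\<in>{1..L}. fro2 (W l))"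

definition Emat :: "nat \<Rightarrow> nat \<Rightarrow> nat \<Rightarrow> nat \<Rightarrow> real mat" where
  "Emat n m i j = Matrix.mat n m (\<lambda>(a,b). if a = i \<and> b = j then 1 else 0)"

definition gradnorm :: "(nat \<Rightarrow> nat) \<Rightarrow> nat \<Rightarrow> real \<Rightarrow> (nat \<Rightarrow> real) \<Rightarrow> (nat \<Rightarrow> real mat) \<Rightarrow> real" where
  "gradnorm d L lam y W = sqrt (\<Sum>l\<in>{1..L}. \<Sum>i<d l. \<Sum>j<d (l - 1).
     (deriv (\<lambda>t. Gobj d L lam y (W(l := W l + t \<cdot>\<^sub>m Emat (d l) (d (l - 1)) i j))) 0)^2)"

definition tdist :: "nat \<Rightarrow> (nat \<Rightarrow> real mat) \<Rightarrow> (nat \<Rightarrow> real mat) \<Rightarrow> real" where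
  "tdist L W V = sqrt (\<Sum>l\<in>{1..L}. fro2 (W l - V l))"

definition tsetdist :: "nat \<Rightarrow> (nat \<Rightarrow> real mat) \<Rightarrow> (nat \<Rightarrow> real mat) set \<Rightarrow> real" where
  "tsetdist L W S = Inf (tdist L W ` S)"

definition Aset :: "(nat \<Rightarrow> nat) \<Rightarrow> nat \<Rightarrow> real \<Rightarrow> (nat \<Rightarrow> real) \<Rightarrow> (nat \<Rightarrow> real) set" where
  "Aset d L lam y = {a. (\<forall>i \<ge> dmin d L. a i = 0) \<and>
     (\<forall>i < dmin d L. a i ^ (2*L - 1) - sqrt lam * y i * a i ^ (L - 1) + lam * a i = 0 \<and> a i \<ge> 0)}"

definition orth :: "nat \<Rightarrow> real mat \<Rightarrow> bool" where
  "orth n Q = (Q \<in> carrier_mat n n \<and> Q * transpose_mat Q = 1\<^sub>m n)"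

fun blkdiag :: "real mat list \<Rightarrow> real mat" where
  "blkdiag [] = 0\<^sub>m 0 0"
| "blkdiag (A # As) = (let B = blkdiag As in
     four_block_mat A (0\<^sub>m (dim_row A) (dim_col B)) (0\<^sub>m (dim_row B) (dim_col A)) B)"

definition blk2 :: "real mat \<Rightarrow> real mat \<Rightarrow> real mat" where
  "blk2 A B = blkdiag [A, B]"

definition permmat :: "nat \<Rightarrow> (nat \<Rightarrow> nat) \<Rightarrow> real mat" where
  "permmat n p = Matrix.mat n n (\<lambda>(i,j). if p i = j then 1 else 0)"

definition Sigmat :: "(nat \<Rightarrow> nat) \<Rightarrow> nat \<Rightarrow> (nat \<Rightarrow> real) \<Rightarrow> nat \<Rightarrow> real mat" where
  "Sigmat d L s l = Matrix.mat (d l) (d (l - 1)) (\<lambda>(i,j). if i = j \<and> i < dmin d L then s i else 0)"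

text \<open>The set W_sigma for the nonincreasing sigma = Pi a, where Pi = permmat p.\<close>
definition Wset :: "(nat \<Rightarrow> nat) \<Rightarrow> nat \<Rightarrow> (nat \<Rightarrow> real) \<Rightarrow> (nat \<Rightarrow> real) \<Rightarrow> (nat \<Rightarrow> nat)
    \<Rightarrow> (nat \<Rightarrow> real mat) set" where
  "Wset d L y s p = {V. \<exists>Q Os O1 O1h.
     (\<forall>l\<in>{2..L}. orth (d (l - 1)) (Q l)) \<and>
     length Os = pY d L y \<and> (\<forall>k < pY d L y. orth (hmult d L y k) (Os ! k)) \<and>
     orth (d 0 - rY d L y) O1 \<and> orth (d L - rY d L y) O1h \<and>
     V 1 = Q 2 * Sigmat d L s 1 * blk2 (permmat (dmin d L) p) (1\<^sub>m (d 0 - dmin d L))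
             * blkdiag (Os @ [O1]) \<and>
     (\<forall>l\<in>{2..L-1}. V l = Q (l + 1) * Sigmat d L s l * transpose_mat (Q l)) \<and>
     V L = blkdiag (map transpose_mat Os @ [transpose_mat O1h])
             * blk2 (transpose_mat (permmat (dmin d L) p)) (1\<^sub>m (d L - dmin d L))
             * Sigmat d L s L * transpose_mat (Q L)}"

text \<open>hat W_{sigma*} = W_{sort(sigma*)}: sort(sigma*) = Pi sigma* for a permutation pi
  making it nonincreasing (the resulting set does not depend on the choice of such pi).\<close>
definition What :: "(nat \<Rightarrow> nat) \<Rightarrow> nat \<Rightarrow> (nat \<Rightarrow> real) \<Rightarrow> (nat \<Rightarrow> real) \<Rightarrow> (nat \<Rightarrow> real mat) set" where
  "What d L y a = (\<Union>p \<in> {p. p permutes {..<dmin d L} \<and>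
        (\<forall>i j. i \<le> j \<and> j < dmin d L \<longrightarrow> a (p j) \<le> a (p i))}.
      Wset d L y (\<lambda>i. if i < dmin d L then a (p i) else 0) p)"

end

theory Submission
  imports Defs "Jordan_Normal_Form.Determinant"
begin

(* At the threshold value of lam the scalar polynomial
   f(s) = s^(2L-1) - sqrt lam y_i s^(L-1) + lam s, whose nonnegative roots are the admissible
   singular values, has a double root s0 > 0. Take sigma* = s0 e_i and move along the ray of
   tuples whose every layer is s e_i e_i^T. Along this ray the distance to the solution set
   grows linearly in s - s0 (between s - s0 and sqrt L (s - s0), the lower bound coming from the
   norm of a middle layer, which needs L >= 3), while the gradient norm equals 2 sqrt L |f(s)|,
   which is o(s - s0) because f(s0) = f'(s0) = 0. No error bound can hold. *)

section \<open>Frobenius norm\<close>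

lemma fro2_nonneg: "fro2 A \<ge> 0"
  unfolding fro2_def by (auto intro!: sum_nonneg)

definition mat_trace :: "real mat \<Rightarrow> real" where
  "mat_trace M = (\<Sum>i<dim_row M. M $$ (i,i))"

lemma mat_trace_mult_comm:
  assumes "A \<in> carrier_mat n m" "B \<in> carrier_mat m n"
  shows "mat_trace (A * B) = mat_trace (B * A)"
proof -
  have "mat_trace (A * B) = (\<Sum>i<n. \<Sum>k<m. A $$ (i,k) * B $$ (k,i))"
    using assms unfolding mat_trace_def by (auto simp: scalar_prod_def intro!: sum.cong)
  also have "\<dots> = (\<Sum>k<m. \<Sum>i<n. B $$ (k,i) * A $$ (i,k))"
    by (subst sum.swap) (simp add: mult.commute)
  also have "\<dots> = mat_trace (B * A)"
    using assms unfolding mat_trace_def by (auto simp: scalar_prod_def intro!: sum.cong)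
  finally show ?thesis .
qed

lemma fro2_eq_trace_mult_transpose:
  assumes "A \<in> carrier_mat n m"
  shows "fro2 A = mat_trace (A * transpose_mat A)"
  using assms unfolding fro2_def mat_trace_def
  by (auto simp: scalar_prod_def power2_eq_square intro!: sum.cong)

lemma fro2_eq_trace_transpose_mult:
  assumes "A \<in> carrier_mat n m"
  shows "fro2 A = mat_trace (transpose_mat A * A)"
  using fro2_eq_trace_mult_transpose[OF assms] mat_trace_mult_comm[of A n m "transpose_mat A"] assms
  by simp

lemma orth_transpose_mult:
  assumes "orth n Q"
  shows "transpose_mat Q * Q = 1\<^sub>m n"
  using assms unfolding orth_def by (meson mat_mult_left_right_inverse transpose_carrier_mat)

lemma fro2_orth_mult:
  assumes Q: "orth n Q" and X: "X \<in> carrier_mat n m"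
  shows "fro2 (Q * X) = fro2 X"
proof -
  have Qc: "Q \<in> carrier_mat n n" using Q by (simp add: orth_def)
  have "transpose_mat (Q * X) * (Q * X) = transpose_mat X * (transpose_mat Q * Q) * X"
    using Qc X by (simp add: transpose_mult[of _ n n] assoc_mult_mat[of _ m n _ n _ m])
  also have "\<dots> = transpose_mat X * X"
    using X by (simp add: orth_transpose_mult[OF Q])
  finally show ?thesis
    using fro2_eq_trace_transpose_mult[of "Q * X" n m] fro2_eq_trace_transpose_mult[OF X] Qc X
    by simp
qed

lemma fro2_mult_transpose_orth:
  assumes R: "orth m R" and X: "X \<in> carrier_mat n m"
  shows "fro2 (X * transpose_mat R) = fro2 X"
proof -
  have Rc: "R \<in> carrier_mat m m" using R by (simp add: orth_def)
  have "(X * transpose_mat R) * transpose_mat (X * transpose_mat R) = X * (transpose_mat R * R) * transpose_mat X"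
    using Rc X by (simp add: transpose_mult[of _ n m] assoc_mult_mat[of _ n m _ m _ n])
  also have "\<dots> = X * transpose_mat X"
    using X by (simp add: orth_transpose_mult[OF R])
  finally show ?thesis
    using fro2_eq_trace_mult_transpose[of "X * transpose_mat R" n m] fro2_eq_trace_mult_transpose[OF X] Rc X
    by simp
qed

lemma fro2_orth_conj:
  assumes "orth n Q" "orth m R" "A \<in> carrier_mat n m"
  shows "fro2 (Q * A * transpose_mat R) = fro2 A"
  using assms fro2_mult_transpose_orth[of m R "Q * A" n] fro2_orth_mult[of n Q A m]
  by (auto simp: orth_def)

lemma sqrt_fro2_triangle:
  assumes "A \<in> carrier_mat n m" "B \<in> carrier_mat n m"
  shows "sqrt (fro2 A) \<le> sqrt (fro2 (A - B)) + sqrt (fro2 B)"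
proof -
  let ?I = "{..<n} \<times> {..<m}"
  have L2: "sqrt (fro2 M) = L2_set (\<lambda>x. M $$ x) ?I" if "M \<in> carrier_mat n m" for M
    using that unfolding L2_set_def fro2_def by (simp add: sum.cartesian_product)
  have "sqrt (fro2 A) = L2_set (\<lambda>x. (A - B) $$ x + B $$ x) ?I"
    using assms by (auto simp: L2 intro!: L2_set_cong)
  also have "\<dots> \<le> L2_set (\<lambda>x. (A - B) $$ x) ?I + L2_set (\<lambda>x. B $$ x) ?I"
    by (rule L2_set_triangle_ineq)
  also have "\<dots> = sqrt (fro2 (A - B)) + sqrt (fro2 B)"
    using L2[OF minus_carrier_mat[OF assms(2)]] L2[OF assms(2)] by simp
  finally show ?thesis .
qed

section \<open>The gradient along a diagonal ray\<close>

lemma sum_lessThan_delta_mult: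
  assumes "j < (n::nat)"
  shows "(\<Sum>r<n. (if r = j then c else 0) * X r) = c * (X j :: real)"
proof -
  have "(\<Sum>r<n. (if r = j then c else 0) * X r) = (\<Sum>r<n. if r = j then c * X j else 0)"
    by (rule sum.cong) auto
  also have "\<dots> = c * X j" using assms by (subst sum.delta) auto
  finally show ?thesis .
qed

lemma sum_lessThan_delta:
  "(\<Sum>q<(m::nat). if q = q0 then f q else 0) = (if q0 < m then f q0 else (0::real))"
  by (subst sum.delta) auto

lemma sum_lessThan_delta2:
  assumes "P < (n::nat)" "Q < (m::nat)"
  shows "(\<Sum>p<n. \<Sum>q<m. X p q * (if p = P \<and> q = Q then c else 0)) = X P Q * (c::real)"
proof -
  have "(\<Sum>q<m. X p q * (if p = P \<and> q = Q then c else 0)) = (if p = P then X P Q * c else 0)" for p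
    using sum_lessThan_delta_mult[OF assms(2), of c "X P"] by (auto simp: mult.commute)
  then show ?thesis using assms by (simp add: sum_lessThan_delta)
qed

definition single_vec :: "nat \<Rightarrow> real \<Rightarrow> nat \<Rightarrow> real" where
  "single_vec i s j = (if j = i then s else 0)"

lemma sum_single_vec_sq:
  assumes "i < (m::nat)"
  shows "(\<Sum>u<m. (single_vec i c u)\<^sup>2) = c\<^sup>2"
  using assms by (simp add: single_vec_def if_distrib[of "\<lambda>x. x\<^sup>2"] sum_lessThan_delta cong: if_cong)

definition diag_tuple :: "(nat \<Rightarrow> nat) \<Rightarrow> nat \<Rightarrow> nat \<Rightarrow> real \<Rightarrow> nat \<Rightarrow> real mat" where
  "diag_tuple d L i s = Sigmat d L (single_vec i s)"

lemma Sigmat_carrier [simp]: "Sigmat d L \<sigma> l \<in> carrier_mat (d l) (d (l - 1))"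
  by (simp add: Sigmat_def)

lemma diag_tuple_carrier [simp]: "diag_tuple d L i s l \<in> carrier_mat (d l) (d (l - 1))"
  unfolding diag_tuple_def by (rule Sigmat_carrier)

definition crit_poly :: "nat \<Rightarrow> real \<Rightarrow> real \<Rightarrow> real \<Rightarrow> real" where
  "crit_poly L lam Y s = s ^ (2 * L - 1) - sqrt lam * Y * s ^ (L - 1) + lam * s"

lemma crit_poly_factor:
  assumes "L \<ge> 1"
  shows "crit_poly L lam Y s = s ^ (L - 1) * (s ^ L - sqrt lam * Y) + lam * s"
proof -
  have "L - 1 + L = 2 * L - 1" using assms by simp
  then have "s ^ (L - 1) * s ^ L = s ^ (2 * L - 1)"
    by (metis power_add)
  then show ?thesis unfolding crit_poly_def by (simp add: algebra_simps)
qed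

fun chain_entries :: "(nat \<Rightarrow> nat \<times> nat \<Rightarrow> real) \<Rightarrow> (nat \<Rightarrow> nat) \<Rightarrow> nat \<Rightarrow> nat \<times> nat \<Rightarrow> real" where
  "chain_entries \<psi> d 0 = (\<lambda>(p,q). if p = q then 1 else 0)"
| "chain_entries \<psi> d (Suc k) = (\<lambda>(p,q). \<Sum>r<d k. \<psi> (Suc k) (p,r) * chain_entries \<psi> d k (r,q))"

lemma prodW_eq_chain_entries:
  assumes "\<forall>k\<in>{1..K}. W k = Matrix.mat (d k) (d (k - 1)) (\<psi> k)"
  shows "prodW d W K = Matrix.mat (d K) (d 0) (chain_entries \<psi> d K)"
  using assms
proof (induction K)
  case 0
  show ?case by (rule eq_matI) auto
next
  case (Suc K)
  then have IH: "prodW d W K = Matrix.mat (d K) (d 0) (chain_entries \<psi> d K)" by auto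
  have W: "W (Suc K) = Matrix.mat (d (Suc K)) (d K) (\<psi> (Suc K))" using Suc.prems by auto
  show ?case by (rule eq_matI) (auto simp: IH W scalar_prod_def intro!: sum.cong)
qed

text \<open>Entries of the layers of \<open>diag_tuple\<close> after adding \<open>t\<close> to entry \<open>(a,b)\<close> of layer \<open>l\<close>.
  Their partial products are affine in \<open>t\<close>, with constant term \<open>diag_chain_entries\<close> and slope
  \<open>perturbation_coeff\<close>; this gives every partial derivative of \<open>Gobj\<close> on the ray in closed form.\<close>
definition perturbed_entries :: "nat \<Rightarrow> nat \<Rightarrow> nat \<Rightarrow> nat \<Rightarrow> real \<Rightarrow> real \<Rightarrow> nat \<Rightarrow> nat \<times> nat \<Rightarrow> real" where
  "perturbed_entries i l a b s t k = (\<lambda>(p,q).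
     (if p = i \<and> q = i then s else 0) + (if k = l \<and> p = a \<and> q = b then t else 0))"

definition diag_chain_entries :: "nat \<Rightarrow> real \<Rightarrow> nat \<Rightarrow> nat \<times> nat \<Rightarrow> real" where
  "diag_chain_entries i s k = (\<lambda>(p,q).
     if k = 0 then (if p = q then 1 else 0) else (if p = i \<and> q = i then s ^ k else 0))"

definition perturbation_coeff :: "nat \<Rightarrow> nat \<Rightarrow> nat \<Rightarrow> nat \<Rightarrow> real \<Rightarrow> nat \<Rightarrow> nat \<times> nat \<Rightarrow> real" where
  "perturbation_coeff i l a b s k = (\<lambda>(p,q). if k < l then 0 else
     s ^ (k - l) * (if k = l then (if p = a then 1 else 0) else (if p = i \<and> a = i then 1 else 0))
       * diag_chain_entries i s (l - 1) (b,q))"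

context
  fixes d :: "nat \<Rightarrow> nat" and L i l a b :: nat and s t :: real
  assumes i_dim: "\<forall>k\<le>L. i < d k" and l: "1 \<le> l" "l \<le> L" and ab: "a < d l" "b < d (l - 1)"
    and i_dmin: "i < dmin d L"
begin

lemma sum_perturbed_entries:
  assumes "i < n" "Suc k = l \<Longrightarrow> b < n"
  shows "(\<Sum>r<n. perturbed_entries i l a b s t (Suc k) (p,r) * X r)
       = (if p = i then s * X i else 0) + (if Suc k = l \<and> p = a then t * X b else 0)"
proof -
  have "(\<Sum>r<n. perturbed_entries i l a b s t (Suc k) (p,r) * X r)
      = (\<Sum>r<n. (if r = i then (if p = i then s else 0) else 0) * X r)
      + (\<Sum>r<n. (if r = b then (if Suc k = l \<and> p = a then t else 0) else 0) * X r)"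
    unfolding sum.distrib[symmetric] by (rule sum.cong) (auto simp: perturbed_entries_def algebra_simps)
  also have "\<dots> = (if p = i then s * X i else 0) + (if Suc k = l \<and> p = a then t * X b else 0)"
    using assms by (cases "Suc k = l") (auto simp: sum_lessThan_delta_mult)
  finally show ?thesis .
qed

lemma chain_entries_perturbed:
  "k \<le> L \<Longrightarrow> chain_entries (perturbed_entries i l a b s t) d k (p,q)
     = diag_chain_entries i s k (p,q) + t * perturbation_coeff i l a b s k (p,q)"
proof (induction k arbitrary: p q)
  case 0
  then show ?case using l by (simp add: diag_chain_entries_def perturbation_coeff_def)
next
  case (Suc k)
  have "i < d k" "Suc k = l \<Longrightarrow> b < d k" using i_dim ab Suc.prems by auto
  then have "chain_entries (perturbed_entries i l a b s t) d (Suc k) (p,q)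
      = (if p = i then s * chain_entries (perturbed_entries i l a b s t) d k (i,q) else 0)
      + (if Suc k = l \<and> p = a then t * chain_entries (perturbed_entries i l a b s t) d k (b,q) else 0)"
    by (simp add: sum_perturbed_entries)
  also have "\<dots> = diag_chain_entries i s (Suc k) (p,q) + t * perturbation_coeff i l a b s (Suc k) (p,q)"
  proof (cases "Suc k < l")
    case True
    then show ?thesis using Suc by (auto simp: diag_chain_entries_def perturbation_coeff_def)
  next
    case False
    show ?thesis
    proof (cases "Suc k = l")
      case True
      then have "perturbation_coeff i l a b s k (x,y) = 0" for x y by (simp add: perturbation_coeff_def)
      then show ?thesis using Suc True
        by (auto simp: perturbation_coeff_def diag_chain_entries_def split: if_splits)
    next
      case False
      then have "Suc k - l = Suc (k - l)" "\<not> k < l" using \<open>\<not> Suc k < l\<close> by auto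
      then show ?thesis using Suc \<open>\<not> Suc k < l\<close> False
        by (cases "k = l") (auto simp: perturbation_coeff_def diag_chain_entries_def algebra_simps)
    qed
  qed
  finally show ?case .
qed

lemma perturbed_diag_tuple_eq_mat:
  "k \<in> {1..L} \<Longrightarrow> ((diag_tuple d L i s)(l := diag_tuple d L i s l + t \<cdot>\<^sub>m Emat (d l) (d (l - 1)) a b)) k
     = Matrix.mat (d k) (d (k - 1)) (perturbed_entries i l a b s t k)"
  using i_dmin
  by (cases "k = l")
    (auto simp: diag_tuple_def Sigmat_def single_vec_def Emat_def perturbed_entries_def intro!: eq_matI)

lemma Gobj_perturbed_diag_tuple:
  "Gobj d L lam y ((diag_tuple d L i s)(l := diag_tuple d L i s l + t \<cdot>\<^sub>m Emat (d l) (d (l - 1)) a b)) =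
   (\<Sum>p<d L. \<Sum>q<d 0. (diag_chain_entries i s L (p,q) + t * perturbation_coeff i l a b s L (p,q)
                         - sqrt lam * (if p = q \<and> p < dmin d L then y p else 0))\<^sup>2)
   + lam * (\<Sum>k\<in>{1..L}. \<Sum>p<d k. \<Sum>q<d (k - 1).
       (perturbed_entries i l a b s 0 k (p,q) + t * (if k = l \<and> p = a \<and> q = b then 1 else 0))\<^sup>2)"
proof -
  let ?W = "(diag_tuple d L i s)(l := diag_tuple d L i s l + t \<cdot>\<^sub>m Emat (d l) (d (l - 1)) a b)"
  have P: "prodW d ?W L = Matrix.mat (d L) (d 0) (chain_entries (perturbed_entries i l a b s t) d L)"
    by (rule prodW_eq_chain_entries) (use perturbed_diag_tuple_eq_mat in auto)
  have "fro2 (?W k) = (\<Sum>p<d k. \<Sum>q<d (k - 1).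
       (perturbed_entries i l a b s 0 k (p,q) + t * (if k = l \<and> p = a \<and> q = b then 1 else 0))\<^sup>2)"
    if "k \<in> {1..L}" for k
    unfolding perturbed_diag_tuple_eq_mat[OF that] fro2_def
    by (auto simp: perturbed_entries_def intro!: sum.cong)
  then show ?thesis
    unfolding Gobj_def P fro2_def by (simp add: Ymat_def chain_entries_perturbed)
qed

lemma perturbation_coeff_top:
  assumes "2 \<le> L"
  shows "perturbation_coeff i l a b s L (p,q) =
    (if l = 1 then (if p = i \<and> q = b then (if a = i then s ^ (L - 1) else 0) else 0)
     else if l = L then (if p = a \<and> q = i then (if b = i then s ^ (L - 1) else 0) else 0)
     else (if p = i \<and> q = i then (if a = i \<and> b = i then s ^ (L - 1) else 0) else 0))"
proof -
  have "s ^ (L - l) * s ^ (l - 1) = s ^ (L - 1)" using l by (simp flip: power_add)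
  then show ?thesis
    using assms l by (auto simp: perturbation_coeff_def diag_chain_entries_def)
qed

lemma regularizer_partial_sum:
  "(\<Sum>k\<in>{1..L}. \<Sum>p<d k. \<Sum>q<d (k - 1).
      2 * perturbed_entries i l a b s 0 k (p,q) * (if k = l \<and> p = a \<and> q = b then 1 else 0))
   = 2 * (if a = i \<and> b = i then s else 0)"
proof -
  have "(\<Sum>k\<in>{1..L}. \<Sum>p<d k. \<Sum>q<d (k - 1).
          2 * perturbed_entries i l a b s 0 k (p,q) * (if k = l \<and> p = a \<and> q = b then 1 else 0))
      = (\<Sum>k\<in>{1..L}. if k = l then (\<Sum>p<d l. \<Sum>q<d (l - 1).
          2 * perturbed_entries i l a b s 0 l (p,q) * (if p = a \<and> q = b then 1 else 0)) else 0)"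
    by (rule sum.cong) auto
  also have "\<dots> = 2 * perturbed_entries i l a b s 0 l (a,b)"
    using l sum_lessThan_delta2[OF ab, of "\<lambda>p q. 2 * perturbed_entries i l a b s 0 l (p,q)" 1]
    by (simp add: sum.delta)
  finally show ?thesis by (simp add: perturbed_entries_def)
qed

lemma data_fit_partial_sum:
  assumes "2 \<le> L"
  shows "(\<Sum>p<d L. \<Sum>q<d 0. 2 * (diag_chain_entries i s L (p,q)
            - sqrt lam * (if p = q \<and> p < dmin d L then y p else 0)) * perturbation_coeff i l a b s L (p,q))
       = 2 * (if a = i \<and> b = i then s ^ (L - 1) * (s ^ L - sqrt lam * y i) else 0)"
proof -
  define X where "X p q = 2 * (diag_chain_entries i s L (p,q)
      - sqrt lam * (if p = q \<and> p < dmin d L then y p else 0))" for p q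
  have X: "X p q = (if p = q \<and> p = i then 2 * (s ^ L - sqrt lam * y i)
      else if p = q \<and> p < dmin d L then - 2 * sqrt lam * y p else 0)" for p q
    using assms i_dmin by (auto simp: X_def diag_chain_entries_def)
  have i0: "i < d 0" and iL: "i < d L" using i_dim by auto
  note R = perturbation_coeff_top[OF assms]
  consider "l = 1" | "l \<noteq> 1" "l = L" | "l \<noteq> 1" "l \<noteq> L" by blast
  then have "(\<Sum>p<d L. \<Sum>q<d 0. X p q * perturbation_coeff i l a b s L (p,q))
      = 2 * (if a = i \<and> b = i then s ^ (L - 1) * (s ^ L - sqrt lam * y i) else 0)"
  proof cases
    case 1
    then have "(\<Sum>p<d L. \<Sum>q<d 0. X p q * perturbation_coeff i l a b s L (p,q))
        = X i b * (if a = i then s ^ (L - 1) else 0)"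
      unfolding R using sum_lessThan_delta2[OF iL, of b "d 0" X] ab by simp
    then show ?thesis by (auto simp: X)
  next
    case 2
    then have "(\<Sum>p<d L. \<Sum>q<d 0. X p q * perturbation_coeff i l a b s L (p,q))
        = X a i * (if b = i then s ^ (L - 1) else 0)"
      unfolding R using sum_lessThan_delta2[of a "d L" i "d 0" X] ab i0 by simp
    then show ?thesis by (auto simp: X)
  next
    case 3
    then have "(\<Sum>p<d L. \<Sum>q<d 0. X p q * perturbation_coeff i l a b s L (p,q))
        = X i i * (if a = i \<and> b = i then s ^ (L - 1) else 0)"
      unfolding R using sum_lessThan_delta2[OF iL i0, of X] by simp
    then show ?thesis by (auto simp: X)
  qed
  then show ?thesis by (simp add: X_def)
qed

end

lemma partial_deriv_Gobj_diag_tuple: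
  assumes i_dim: "\<forall>k\<le>L. i < d k" and l: "1 \<le> l" "l \<le> L" and ab: "a < d l" "b < d (l - 1)"
    and i_dmin: "i < dmin d L" and L2: "2 \<le> L"
  shows "deriv (\<lambda>t. Gobj d L lam y ((diag_tuple d L i s)(l := diag_tuple d L i s l
             + t \<cdot>\<^sub>m Emat (d l) (d (l - 1)) a b))) 0
       = 2 * (if a = i \<and> b = i then crit_poly L lam (y i) s else 0)"
proof -
  have sq1: "((\<lambda>t. (\<alpha> + t * \<beta> - \<gamma>)\<^sup>2) has_real_derivative 2 * (\<alpha> - \<gamma>) * \<beta>) (at 0)"
    and sq2: "((\<lambda>t. (\<alpha> + t * \<beta>)\<^sup>2) has_real_derivative 2 * \<alpha> * \<beta>) (at 0)" for \<alpha> \<beta> \<gamma> :: real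
    by (auto intro!: derivative_eq_intros)
  note assms' = i_dim l ab i_dmin
  have "deriv (\<lambda>t. Gobj d L lam y ((diag_tuple d L i s)(l := diag_tuple d L i s l
             + t \<cdot>\<^sub>m Emat (d l) (d (l - 1)) a b))) 0
      = (\<Sum>p<d L. \<Sum>q<d 0. 2 * (diag_chain_entries i s L (p,q)
            - sqrt lam * (if p = q \<and> p < dmin d L then y p else 0)) * perturbation_coeff i l a b s L (p,q))
        + lam * (\<Sum>k\<in>{1..L}. \<Sum>p<d k. \<Sum>q<d (k - 1).
            2 * perturbed_entries i l a b s 0 k (p,q) * (if k = l \<and> p = a \<and> q = b then 1 else 0))"
    unfolding Gobj_perturbed_diag_tuple[OF assms']
    by (rule DERIV_imp_deriv, intro DERIV_add DERIV_cmult DERIV_sum sq1 sq2)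
  also have "\<dots> = 2 * (if a = i \<and> b = i then crit_poly L lam (y i) s else 0)"
    unfolding data_fit_partial_sum[OF assms' L2] regularizer_partial_sum[OF assms']
    using crit_poly_factor[of L lam "y i" s] L2 by (auto simp: algebra_simps)
  finally show ?thesis .
qed

lemma gradnorm_diag_tuple:
  assumes i_dim: "\<forall>k\<le>L. i < d k" and i_dmin: "i < dmin d L" and L2: "2 \<le> L"
  shows "gradnorm d L lam y (diag_tuple d L i s) = 2 * sqrt (real L) * \<bar>crit_poly L lam (y i) s\<bar>"
proof -
  define F where "F = crit_poly L lam (y i) s"
  have layer: "(\<Sum>a<d l. \<Sum>b<d (l - 1). (2 * (if a = i \<and> b = i then F else 0))\<^sup>2) = 4 * F\<^sup>2"
    if "l \<in> {1..L}" for l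
  proof -
    have "i < d l" "i < d (l - 1)" using i_dim that by auto
    moreover have "(2 * (if a = i \<and> b = i then F else 0))\<^sup>2 = 1 * (if a = i \<and> b = i then 4 * F\<^sup>2 else 0)"
      for a b by (simp add: power2_eq_square)
    ultimately show ?thesis
      using sum_lessThan_delta2[of i "d l" i "d (l - 1)" "\<lambda>a b. 1" "4 * F\<^sup>2"] by simp
  qed
  have partial: "deriv (\<lambda>t. Gobj d L lam y ((diag_tuple d L i s)(l := diag_tuple d L i s l
             + t \<cdot>\<^sub>m Emat (d l) (d (l - 1)) a b))) 0 = 2 * (if a = i \<and> b = i then F else 0)"
    if "l \<in> {1..L}" "a < d l" "b < d (l - 1)" for l a b
    using that partial_deriv_Gobj_diag_tuple[OF i_dim _ _ _ _ i_dmin L2] by (simp add: F_def)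
  have "gradnorm d L lam y (diag_tuple d L i s)
      = sqrt (\<Sum>l\<in>{1..L}. \<Sum>a<d l. \<Sum>b<d (l - 1). (2 * (if a = i \<and> b = i then F else 0))\<^sup>2)"
    unfolding gradnorm_def
  proof (intro arg_cong[where f = sqrt] sum.cong refl)
    fix l a b assume "l \<in> {1..L}" "a \<in> {..<d l}" "b \<in> {..<d (l - 1)}"
    then show "(deriv (\<lambda>t. Gobj d L lam y ((diag_tuple d L i s)(l := diag_tuple d L i s l
             + t \<cdot>\<^sub>m Emat (d l) (d (l - 1)) a b))) 0)\<^sup>2 = (2 * (if a = i \<and> b = i then F else 0))\<^sup>2"
      by (simp only: partial lessThan_iff)
  qed
  also have "\<dots> = sqrt (4 * real L * F\<^sup>2)" using layer by simp
  also have "\<dots> = 2 * sqrt (real L) * \<bar>F\<bar>" by (simp add: real_sqrt_mult)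
  finally show ?thesis unfolding F_def .
qed

section \<open>The ray meets the solution set\<close>

lemma dmin_le_dim:
  assumes "\<forall>l\<in>{1..L-1}. d l \<ge> dmin d L" "l \<le> L"
  shows "dmin d L \<le> d l"
  using assms unfolding dmin_def by (cases "l = 0 \<or> l = L") auto

lemma rY_le_dmin: "rY d L y \<le> dmin d L"
proof -
  have "rY d L y \<le> card {..<dmin d L}" unfolding rY_def by (rule card_mono) auto
  then show ?thesis by simp
qed

lemma sum_list_hmult: "sum_list (map (hmult d L y) [0..<pY d L y]) = rY d L y"
proof -
  define S where "S = {j. j < dmin d L \<and> y j > 0}"
  define vals where "vals = {y i | i. i < dmin d L \<and> y i > 0}"
  have vals: "vals = y ` S" unfolding vals_def S_def by auto
  have S: "finite S" unfolding S_def by auto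
  then have "finite vals" using vals by simp
  then have distinct: "distinct (yvals d L y)" and set: "set (yvals d L y) = vals"
    unfolding yvals_def vals_def[symmetric] by auto
  define g where "g v = card {j. j < dmin d L \<and> y j = v}" for v
  have "map (hmult d L y) [0..<pY d L y] = map g (yvals d L y)"
    unfolding pY_def hmult_def g_def by (rule nth_equalityI) auto
  then have "sum_list (map (hmult d L y) [0..<pY d L y]) = sum g vals"
    using distinct set by (simp add: sum_list_distinct_conv_sum_set)
  also have "\<dots> = (\<Sum>v\<in>y ` S. card {x \<in> S. y x = v})"
    unfolding vals by (rule sum.cong) (auto simp: g_def S_def intro!: arg_cong[where f = card])
  also have "\<dots> = card S"
    using sum.image_gen[OF S, of "\<lambda>_. 1::nat" y] by simp
  finally show ?thesis unfolding rY_def S_def .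
qed

lemma blkdiag_map_one: "blkdiag (map (\<lambda>n. 1\<^sub>m n) ns) = 1\<^sub>m (sum_list ns)"
  by (induction ns) (auto simp: Let_def intro!: eq_matI)

lemma blkdiag_one_blocks:
  assumes "rY d L y \<le> n"
  shows "blkdiag (map (\<lambda>k. 1\<^sub>m (hmult d L y k)) [0..<pY d L y] @ [1\<^sub>m (n - rY d L y)]) = 1\<^sub>m n"
proof -
  have "map (\<lambda>k. 1\<^sub>m (hmult d L y k)) [0..<pY d L y] @ [1\<^sub>m (n - rY d L y)]
      = map (\<lambda>n. 1\<^sub>m n :: real mat) (map (hmult d L y) [0..<pY d L y] @ [n - rY d L y])"
    by simp
  then have "blkdiag (map (\<lambda>k. 1\<^sub>m (hmult d L y k)) [0..<pY d L y] @ [1\<^sub>m (n - rY d L y)])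
      = 1\<^sub>m (sum_list (map (hmult d L y) [0..<pY d L y] @ [n - rY d L y]))"
    by (simp only: blkdiag_map_one)
  then show ?thesis using assms by (simp add: sum_list_hmult)
qed

lemma permmat_carrier [simp]: "permmat n p \<in> carrier_mat n n"
  and permmat_dims [simp]: "dim_row (permmat n p) = n" "dim_col (permmat n p) = n"
  by (simp_all add: permmat_def)

lemma permmat_in_range:
  fixes p :: "nat \<Rightarrow> nat"
  assumes "p permutes {..<m}" "m \<le> n"
  shows "p u < n \<longleftrightarrow> u < n"
  using \<open>m \<le> n\<close> permutes_in_image[OF assms(1), of u] permutes_not_in[OF assms(1), of u]
  by (cases "u < m") auto

lemma blkdiag_singleton: "blkdiag [B] = B"
  by (auto simp: Let_def intro!: eq_matI)

lemma blk2_permmat: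
  assumes p: "p permutes {..<m}" and "m \<le> n"
  shows "blk2 (permmat m p) (1\<^sub>m (n - m)) = permmat n p"
proof -
  have "u < m \<Longrightarrow> p u < m" for u using permutes_in_image[OF p, of u] by simp
  moreover have "\<not> u < m \<Longrightarrow> p u = u" for u using permutes_not_in[OF p] by simp
  ultimately show ?thesis
    unfolding blk2_def blkdiag_singleton
    by (intro eq_matI) (use \<open>m \<le> n\<close> in \<open>auto simp: permmat_def Let_def\<close>)
qed

lemma transpose_permmat_involution:
  assumes "\<And>x. p (p x) = x"
  shows "transpose_mat (permmat n p) = permmat n p"
  using assms by (auto simp: permmat_def intro!: eq_matI)

lemma orth_permmat:
  assumes p: "p permutes {..<m}" and "m \<le> n"
  shows "orth n (permmat n p)"
proof -
  have "permmat n p * transpose_mat (permmat n p) = 1\<^sub>m n"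
  proof (rule eq_matI)
    fix u v assume uv: "u < dim_row (1\<^sub>m n :: real mat)" "v < dim_col (1\<^sub>m n :: real mat)"
    then have pu: "p u < n" using permmat_in_range[OF assms, of u] by simp
    have "p v = p u \<longleftrightarrow> v = u" using permutes_inj[OF p] by (auto dest: injD)
    moreover have "(\<Sum>r<n. (if p u = r then 1 else 0) * (if p v = r then 1 else (0::real)))
        = (if p v = p u then 1 else 0)"
      using sum_lessThan_delta_mult[OF pu, of 1 "\<lambda>r. if p v = r then 1 else 0"]
      by (simp add: eq_commute[of "p u"])
    ultimately show "(permmat n p * transpose_mat (permmat n p)) $$ (u, v) = 1\<^sub>m n $$ (u, v)"
      using uv by (simp add: permmat_def scalar_prod_def atLeast0LessThan)
  qed auto
  then show ?thesis unfolding orth_def by simp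
qed

lemma permmat_conj:
  assumes p: "p permutes {..<k}" and inv: "\<And>x. p (p x) = x" and "k \<le> n" "k \<le> m"
    and A: "A \<in> carrier_mat n m"
  shows "permmat n p * A * permmat m p = Matrix.mat n m (\<lambda>(u,v). A $$ (p u, p v))"
proof -
  have "permmat n p * A = Matrix.mat n m (\<lambda>(u,r). A $$ (p u, r))"
  proof (rule eq_matI)
    fix u r assume "u < dim_row (Matrix.mat n m (\<lambda>(u,r). A $$ (p u, r)))"
      "r < dim_col (Matrix.mat n m (\<lambda>(u,r). A $$ (p u, r)))"
    then show "(permmat n p * A) $$ (u, r) = Matrix.mat n m (\<lambda>(u,r). A $$ (p u, r)) $$ (u, r)"
      using A permmat_in_range[OF p \<open>k \<le> n\<close>, of u]
      by (simp add: permmat_def scalar_prod_def atLeast0LessThan sum_lessThan_delta_mult eq_commute[of "p u"])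
  qed (use A in auto)
  moreover have "Matrix.mat n m (\<lambda>(u,r). A $$ (p u, r)) * permmat m p = Matrix.mat n m (\<lambda>(u,v). A $$ (p u, p v))"
  proof (rule eq_matI)
    fix u v assume uv: "u < dim_row (Matrix.mat n m (\<lambda>(u,v). A $$ (p u, p v)))"
      "v < dim_col (Matrix.mat n m (\<lambda>(u,v). A $$ (p u, p v)))"
    have "(\<Sum>r<m. A $$ (p u, r) * (if p r = v then 1 else 0)) = (\<Sum>r<m. (if r = p v then 1 else 0) * A $$ (p u, r))"
      by (rule sum.cong) (use inv in auto)
    also have "\<dots> = A $$ (p u, p v)"
      using uv permmat_in_range[OF p \<open>k \<le> m\<close>, of v] by (simp add: sum_lessThan_delta_mult)
    finally show "(Matrix.mat n m (\<lambda>(u,r). A $$ (p u, r)) * permmat m p) $$ (u, v)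
        = Matrix.mat n m (\<lambda>(u,v). A $$ (p u, p v)) $$ (u, v)"
      using uv by (simp add: permmat_def scalar_prod_def atLeast0LessThan)
  qed auto
  ultimately show ?thesis by simp
qed

lemma single_vec_swap_sorted:
  assumes "s0 \<ge> 0" "j \<le> k"
  shows "single_vec i s0 (Transposition.transpose 0 i k) \<le> single_vec i s0 (Transposition.transpose 0 i j)"
  using assms by (cases "k = 0") (auto simp: single_vec_def Transposition.transpose_def)

lemma permmat_conj_swapped_Sigmat:
  fixes d :: "nat \<Rightarrow> nat" and i :: nat
  defines "p \<equiv> Transposition.transpose 0 i"
  assumes i: "i < dmin d L" and dims: "dmin d L \<le> d l" "dmin d L \<le> d (l - 1)"
  shows "permmat (d l) p * Sigmat d L (\<lambda>j. if j < dmin d L then single_vec i s0 (p j) else 0) l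
           * permmat (d (l - 1)) p = diag_tuple d L i s0 l"
proof -
  let ?m = "dmin d L"
  have p: "p permutes {..<?m}" unfolding p_def using i by (intro permutes_swap_id) auto
  have inv: "p (p x) = x" for x unfolding p_def by (simp add: Transposition.transpose_def)
  have "permmat (d l) p * Sigmat d L (\<lambda>j. if j < ?m then single_vec i s0 (p j) else 0) l * permmat (d (l - 1)) p
      = Matrix.mat (d l) (d (l - 1))
          (\<lambda>(u,v). Sigmat d L (\<lambda>j. if j < ?m then single_vec i s0 (p j) else 0) l $$ (p u, p v))"
    by (rule permmat_conj[OF p inv dims]) (simp add: Sigmat_def)
  also have "\<dots> = diag_tuple d L i s0 l"
  proof (rule eq_matI)
    fix u v assume "u < dim_row (diag_tuple d L i s0 l)" "v < dim_col (diag_tuple d L i s0 l)"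
    moreover have "p u = p v \<longleftrightarrow> u = v" using inv by metis
    ultimately show "Matrix.mat (d l) (d (l - 1))
          (\<lambda>(u,v). Sigmat d L (\<lambda>j. if j < ?m then single_vec i s0 (p j) else 0) l $$ (p u, p v)) $$ (u, v)
        = diag_tuple d L i s0 l $$ (u, v)"
      using permmat_in_range[OF p dims(1), of u] permmat_in_range[OF p dims(2), of v]
        permmat_in_range[OF p order_refl, of u] inv
      by (auto simp: diag_tuple_def Sigmat_def single_vec_def)
  qed (auto simp: diag_tuple_def Sigmat_def)
  finally show ?thesis .
qed

lemma diag_tuple_in_What:
  assumes i: "i < dmin d L" and mid: "\<forall>l\<in>{1..L-1}. d l \<ge> dmin d L" and "s0 \<ge> 0" and L2: "L \<ge> 2"
  shows "diag_tuple d L i s0 \<in> What d L y (single_vec i s0)"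
proof -
  define p where "p = Transposition.transpose 0 i"
  define \<sigma> where "\<sigma> = (\<lambda>j. if j < dmin d L then single_vec i s0 (p j) else 0)"
  have dims: "l \<le> L \<Longrightarrow> dmin d L \<le> d l" for l using dmin_le_dim[OF mid] by simp
  have p: "p permutes {..<dmin d L}" unfolding p_def using i by (intro permutes_swap_id) auto
  have p_sym: "transpose_mat (permmat n p) = permmat n p" for n
    by (rule transpose_permmat_involution) (simp add: p_def Transposition.transpose_def)
  have conj: "permmat (d l) p * Sigmat d L \<sigma> l * permmat (d (l - 1)) p = diag_tuple d L i s0 l"
    if "l \<in> {1..L}" for l
    unfolding p_def \<sigma>_def using that dims by (intro permmat_conj_swapped_Sigmat i) auto
  define Os where "Os = map (\<lambda>k. 1\<^sub>m (hmult d L y k) :: real mat) [0..<pY d L y]"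
  have rY: "rY d L y \<le> d 0" "rY d L y \<le> d L" using rY_le_dmin[of d L y] dims by fastforce+
  have blk_p: "blk2 (permmat (dmin d L) p) (1\<^sub>m (d l - dmin d L)) = permmat (d l) p" if "l \<le> L" for l
    using blk2_permmat[OF p dims[OF that]] .
  have "diag_tuple d L i s0 \<in> Wset d L y \<sigma> p"
    unfolding Wset_def
  proof (rule CollectI, rule exI[of _ "\<lambda>l. permmat (d (l - 1)) p"], rule exI[of _ Os],
      rule exI[of _ "1\<^sub>m (d 0 - rY d L y)"], rule exI[of _ "1\<^sub>m (d L - rY d L y)"], intro conjI)
    show "\<forall>l\<in>{2..L}. orth (d (l - 1)) (permmat (d (l - 1)) p)"
      using orth_permmat[OF p] dims by auto
    show "length Os = pY d L y" "\<forall>k<pY d L y. orth (hmult d L y k) (Os ! k)"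
      "orth (d 0 - rY d L y) (1\<^sub>m (d 0 - rY d L y))" "orth (d L - rY d L y) (1\<^sub>m (d L - rY d L y))"
      unfolding Os_def orth_def by auto
    show "diag_tuple d L i s0 1 = permmat (d (2 - 1)) p * Sigmat d L \<sigma> 1
        * blk2 (permmat (dmin d L) p) (1\<^sub>m (d 0 - dmin d L)) * blkdiag (Os @ [1\<^sub>m (d 0 - rY d L y)])"
      using conj[of 1] L2 blk_p[of 0] blkdiag_one_blocks[OF rY(1)]
        right_mult_one_mat[OF diag_tuple_carrier[of d L i s0 1]]
      by (simp add: Os_def Sigmat_def)
    show "\<forall>l\<in>{2..L - 1}. diag_tuple d L i s0 l
        = permmat (d (l + 1 - 1)) p * Sigmat d L \<sigma> l * transpose_mat (permmat (d (l - 1)) p)"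
      using conj p_sym by auto
    show "diag_tuple d L i s0 L = blkdiag (map transpose_mat Os @ [transpose_mat (1\<^sub>m (d L - rY d L y))])
        * blk2 (transpose_mat (permmat (dmin d L) p)) (1\<^sub>m (d L - dmin d L))
        * Sigmat d L \<sigma> L * transpose_mat (permmat (d (L - 1)) p)"
      using conj[of L] L2 blk_p[of L] blkdiag_one_blocks[OF rY(2)] by (simp add: Os_def p_sym o_def Sigmat_def)
  qed
  moreover have "\<forall>j k. j \<le> k \<and> k < dmin d L \<longrightarrow> single_vec i s0 (p k) \<le> single_vec i s0 (p j)"
    unfolding p_def using single_vec_swap_sorted[OF \<open>s0 \<ge> 0\<close>] by blast
  ultimately show ?thesis
    unfolding What_def \<sigma>_def using p by auto
qed

section \<open>Distance from the ray to the solution set\<close>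

lemma fro2_Sigmat:
  assumes "dmin d L \<le> d l" "dmin d L \<le> d (l - 1)"
  shows "fro2 (Sigmat d L \<sigma> l) = (\<Sum>u<dmin d L. (\<sigma> u)\<^sup>2)"
proof -
  have "fro2 (Sigmat d L \<sigma> l) = (\<Sum>u<d l. if u < dmin d L then (\<sigma> u)\<^sup>2 else 0)"
    unfolding fro2_def Sigmat_def using assms
    by (intro sum.cong refl) (auto simp: if_distrib[of "\<lambda>x. x\<^sup>2"] sum_lessThan_delta cong: if_cong)
  also have "\<dots> = (\<Sum>u\<in>{..<d l} \<inter> {u. u < dmin d L}. (\<sigma> u)\<^sup>2)"
    by (simp add: sum.inter_restrict)
  also have "{..<d l} \<inter> {u. u < dmin d L} = {..<dmin d L}" using assms by auto
  finally show ?thesis .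
qed

lemma tdist_diag_tuple:
  assumes mid: "\<forall>l\<in>{1..L-1}. d l \<ge> dmin d L" and i: "i < dmin d L"
  shows "tdist L (diag_tuple d L i s) (diag_tuple d L i s0) = sqrt (real L) * \<bar>s - s0\<bar>"
proof -
  have "fro2 (diag_tuple d L i s l - diag_tuple d L i s0 l) = (s - s0)\<^sup>2" if "l \<in> {1..L}" for l
  proof -
    have "diag_tuple d L i s l - diag_tuple d L i s0 l = Sigmat d L (single_vec i (s - s0)) l"
      by (auto simp: diag_tuple_def Sigmat_def single_vec_def intro!: eq_matI)
    moreover have "dmin d L \<le> d l" "dmin d L \<le> d (l - 1)" using that dmin_le_dim[OF mid] by auto
    ultimately show ?thesis using fro2_Sigmat sum_single_vec_sq[OF i] by simp
  qed
  then have "tdist L (diag_tuple d L i s) (diag_tuple d L i s0) = sqrt (real L * (s - s0)\<^sup>2)"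
    unfolding tdist_def by simp
  then show ?thesis by (simp add: real_sqrt_mult)
qed

text \<open>Every point of \<open>What\<close> has a middle layer \<open>Q\<^sub>3 \<Sigma> Q\<^sub>2\<^sup>T\<close> of Frobenius norm \<open>s0\<close>, whereas
  that layer of \<open>diag_tuple\<close> has norm \<open>s\<close>; this is where \<open>L \<ge> 3\<close> is used.\<close>
lemma diag_tuple_dist_What_lower:
  assumes mid: "\<forall>l\<in>{1..L-1}. d l \<ge> dmin d L" and i: "i < dmin d L" and L3: "L \<ge> 3"
    and "s0 \<ge> 0" and V: "V \<in> What d L y (single_vec i s0)"
  shows "s - s0 \<le> tdist L (diag_tuple d L i s) V"
proof -
  obtain p where p: "p permutes {..<dmin d L}"
    and "V \<in> Wset d L y (\<lambda>j. if j < dmin d L then single_vec i s0 (p j) else 0) p"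
    using V unfolding What_def by auto
  then obtain Q where Q: "\<forall>l\<in>{2..L}. orth (d (l - 1)) (Q l)"
    and V2: "V 2 = Q 3 * Sigmat d L (\<lambda>j. if j < dmin d L then single_vec i s0 (p j) else 0) 2
                   * transpose_mat (Q 2)"
    using L3 unfolding Wset_def by (fastforce simp: numeral_3_eq_3)
  have Q3: "orth (d 2) (Q 3)" and Q2: "orth (d 1) (Q 2)"
    using Q L3 by (auto dest: bspec[of _ _ 3] bspec[of _ _ 2])
  have dims: "dmin d L \<le> d 2" "dmin d L \<le> d (2 - 1)" using dmin_le_dim[OF mid] L3 by auto
  have \<Sigma>: "Sigmat d L (\<lambda>j. if j < dmin d L then single_vec i s0 (p j) else 0) 2 \<in> carrier_mat (d 2) (d 1)"
    using Sigmat_carrier[of d L _ 2] by simp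
  have "fro2 (V 2) = (\<Sum>u<dmin d L. (single_vec i s0 (p u))\<^sup>2)"
    unfolding V2 fro2_orth_conj[OF Q3 Q2 \<Sigma>] fro2_Sigmat[OF dims] by simp
  also have "\<dots> = s0\<^sup>2"
    using sum.permute[OF p, of "\<lambda>u. (single_vec i s0 u)\<^sup>2"] sum_single_vec_sq[OF i] by (simp add: comp_def)
  finally have V2_norm: "fro2 (V 2) = s0\<^sup>2" .
  have W2_norm: "fro2 (diag_tuple d L i s 2) = s\<^sup>2"
    using fro2_Sigmat[OF dims] sum_single_vec_sq[OF i] by (simp add: diag_tuple_def)
  have "V 2 \<in> carrier_mat (d 2) (d 1)" unfolding V2 using Q3 Q2 by (auto simp: orth_def Sigmat_def)
  then have "sqrt (s\<^sup>2) \<le> sqrt (fro2 (diag_tuple d L i s 2 - V 2)) + sqrt (s0\<^sup>2)"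
    using sqrt_fro2_triangle[of "diag_tuple d L i s 2" "d 2" "d 1" "V 2"] diag_tuple_carrier[of d L i s 2]
      V2_norm W2_norm by simp
  then have "s - s0 \<le> sqrt (fro2 (diag_tuple d L i s 2 - V 2))" using \<open>s0 \<ge> 0\<close> by simp
  also have "\<dots> \<le> tdist L (diag_tuple d L i s) V"
    unfolding tdist_def using L3 by (intro real_sqrt_le_mono member_le_sum) (auto simp: fro2_nonneg)
  finally show ?thesis .
qed

lemma tsetdist_diag_tuple_What:
  assumes mid: "\<forall>l\<in>{1..L-1}. d l \<ge> dmin d L" and i: "i < dmin d L" and L3: "L \<ge> 3"
    and "s0 \<ge> 0" "h \<ge> 0"
  shows "h \<le> tsetdist L (diag_tuple d L i (s0 + h)) (What d L y (single_vec i s0))"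
    and "tsetdist L (diag_tuple d L i (s0 + h)) (What d L y (single_vec i s0)) \<le> sqrt (real L) * h"
proof -
  let ?D = "tdist L (diag_tuple d L i (s0 + h)) ` What d L y (single_vec i s0)"
  have center: "diag_tuple d L i s0 \<in> What d L y (single_vec i s0)"
    using diag_tuple_in_What[OF i mid \<open>s0 \<ge> 0\<close>] L3 by simp
  show "h \<le> tsetdist L (diag_tuple d L i (s0 + h)) (What d L y (single_vec i s0))"
    unfolding tsetdist_def
    using center diag_tuple_dist_What_lower[OF mid i L3 \<open>s0 \<ge> 0\<close>, of _ y "s0 + h"]
    by (intro cInf_greatest) auto
  have "bdd_below ?D"
    by (rule bdd_belowI[of _ 0]) (auto simp: tdist_def fro2_nonneg intro!: sum_nonneg)
  then have "tsetdist L (diag_tuple d L i (s0 + h)) (What d L y (single_vec i s0))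
      \<le> tdist L (diag_tuple d L i (s0 + h)) (diag_tuple d L i s0)"
    unfolding tsetdist_def using center by (intro cInf_lower) auto
  also have "\<dots> = sqrt (real L) * h"
    using tdist_diag_tuple[OF mid i] \<open>h \<ge> 0\<close> by simp
  finally show "tsetdist L (diag_tuple d L i (s0 + h)) (What d L y (single_vec i s0)) \<le> sqrt (real L) * h" .
qed

section \<open>The double root at the threshold\<close>

lemma crit_poly_has_derivative:
  "(crit_poly L lam Y has_real_derivative
     real (2 * L - 1) * s ^ (2 * L - 2) - sqrt lam * Y * (real (L - 1) * s ^ (L - 2)) + lam) (at s)"
proof -
  have "2 * L - 1 - 1 = 2 * L - 2" "L - 1 - 1 = L - 2" by auto
  then show ?thesis unfolding crit_poly_def[abs_def] by (auto intro!: derivative_eq_intros)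
qed

text \<open>After scaling \<open>s = w t\<close>, \<open>\<lambda> = w\<^bsup>2L-2\<^esup>\<close>, \<open>Y = w S\<close>, the polynomial becomes
  \<open>w\<^bsup>2L-1\<^esup> t (t\<^bsup>2L-2\<^esup> - S t\<^bsup>L-2\<^esup> + 1)\<close>; its double root \<open>\<gamma>\<close> is characterised by
  \<open>\<gamma>\<^bsup>2L-2\<^esup> = (L-2)/L\<close>, and then \<open>S = \<gamma>\<^sup>L + \<gamma>\<^bsup>2-L\<^esup>\<close>.\<close>
lemma crit_poly_double_root:
  assumes L: "L = m + 2" and \<gamma>: "\<gamma> > 0" "\<gamma> ^ (2 * L - 2) = (real L - 2) / real L" and w: "w > 0"
  defines "S \<equiv> \<gamma> ^ L + 1 / \<gamma> ^ (L - 2)"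
  shows "crit_poly L (w ^ (2 * L - 2)) (w * S) (w * \<gamma>) = 0"
    and "(crit_poly L (w ^ (2 * L - 2)) (w * S) has_real_derivative 0) (at (w * \<gamma>))"
proof -
  have pow: "x ^ (2 * L - 1) = x ^ 3 * (x ^ m)\<^sup>2" "x ^ (2 * L - 2) = x\<^sup>2 * (x ^ m)\<^sup>2"
    "x ^ (L - 1) = x * x ^ m" "x ^ (L - 2) = x ^ m" "x ^ L = x\<^sup>2 * x ^ m" for x :: real
    by (simp_all add: L power_add flip: power_mult)
      (simp_all add: numeral_3_eq_3 power2_eq_square mult.commute)
  define P where "P = w ^ m"
  define G where "G = \<gamma> ^ m"
  have G: "G > 0" "\<gamma>\<^sup>2 * G\<^sup>2 = real m / (real m + 2)"
    using \<gamma> by (simp_all add: G_def L flip: pow(2))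
  have SG: "S * G = \<gamma>\<^sup>2 * G\<^sup>2 + 1"
    using G by (simp add: S_def pow G_def[symmetric] field_simps power2_eq_square)
  have sq: "sqrt (w ^ (2 * L - 2)) = w * P"
    using w unfolding pow P_def by (simp add: real_sqrt_mult power_mult_distrib)
  have "crit_poly L (w ^ (2 * L - 2)) (w * S) (w * \<gamma>) = w ^ 3 * P\<^sup>2 * \<gamma> * (\<gamma>\<^sup>2 * G\<^sup>2 - S * G + 1)"
    unfolding crit_poly_def sq unfolding pow power_mult_distrib P_def[symmetric] G_def[symmetric]
    by (simp add: algebra_simps power2_eq_square power3_eq_cube)
  then show "crit_poly L (w ^ (2 * L - 2)) (w * S) (w * \<gamma>) = 0" by (simp add: SG)
  have "real (2 * L - 1) * (w * \<gamma>) ^ (2 * L - 2)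
        - sqrt (w ^ (2 * L - 2)) * (w * S) * (real (L - 1) * (w * \<gamma>) ^ (L - 2)) + w ^ (2 * L - 2)
      = w\<^sup>2 * P\<^sup>2 * ((2 * real m + 3) * (\<gamma>\<^sup>2 * G\<^sup>2) - (real m + 1) * (S * G) + 1)"
    unfolding sq unfolding pow power_mult_distrib P_def[symmetric] G_def[symmetric]
    by (simp add: L algebra_simps power2_eq_square)
  also have "(2 * real m + 3) * (\<gamma>\<^sup>2 * G\<^sup>2) - (real m + 1) * (S * G) + 1 = 0"
  proof -
    have "(2 * real m + 3) * q - (real m + 1) * (q + 1) + 1 = (real m + 2) * q - real m" for q
      by (simp add: algebra_simps)
    from this[of "real m / (real m + 2)"] show ?thesis unfolding SG G(2) by simp
  qed
  finally show "(crit_poly L (w ^ (2 * L - 2)) (w * S) has_real_derivative 0) (at (w * \<gamma>))"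
    using crit_poly_has_derivative by (metis mult_zero_right)
qed

lemma crit_poly_has_double_root:
  assumes L3: "L \<ge> 3" and Y: "Y > 0"
    and lam: "lam = Y powr (2 * (real L - 1)) *
           ((((real L - 2) / real L) powr (real L / (2 * (real L - 1)))
            + (real L / (real L - 2)) powr ((real L - 2) / (2 * (real L - 1))))
            powr (- 2 * (real L - 1)))"
  shows "\<exists>s0>0. crit_poly L lam Y s0 = 0 \<and> (crit_poly L lam Y has_real_derivative 0) (at s0)"
proof -
  obtain m where L: "L = m + 2" using L3 by (intro that[of "L - 2"]) simp
  define q where "q = (real L - 2) / real L"
  have q: "q > 0" using L3 by (simp add: q_def)
  define \<gamma> where "\<gamma> = q powr (1 / (2 * (real L - 1)))"
  have \<gamma>: "\<gamma> > 0" using q by (simp add: \<gamma>_def)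
  have \<gamma>_pow: "\<gamma> ^ k = q powr (real k / (2 * (real L - 1)))" for k
    using \<gamma> q by (simp add: \<gamma>_def powr_powr flip: powr_realpow)
  define S where "S = \<gamma> ^ L + 1 / \<gamma> ^ (L - 2)"
  have S: "S > 0" using \<gamma> by (simp add: S_def add_pos_pos)
  have S_eq: "((real L - 2) / real L) powr (real L / (2 * (real L - 1)))
        + (real L / (real L - 2)) powr ((real L - 2) / (2 * (real L - 1))) = S"
    using q L3 by (simp add: S_def \<gamma>_pow q_def powr_divide of_nat_diff)
  define w where "w = Y / S"
  have w: "w > 0" using Y S by (simp add: w_def)
  have "Y powr e * S powr (- e) = w powr e" for e
    unfolding w_def powr_minus powr_divide by (simp add: divide_inverse)
  from this[of "2 * (real L - 1)"] have "lam = w powr (2 * (real L - 1))"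
    unfolding lam S_eq by simp
  also have "\<dots> = w ^ (2 * L - 2)"
    using w L3 by (simp add: of_nat_diff flip: powr_realpow)
  finally have lam_w: "lam = w ^ (2 * L - 2)" .
  have "\<gamma> ^ (2 * L - 2) = (real L - 2) / real L"
    using q L3 by (simp add: \<gamma>_pow q_def of_nat_diff)
  note root = crit_poly_double_root[OF L \<gamma> this w]
  have "Y = w * S" using S by (simp add: w_def)
  then show ?thesis
    using root mult_pos_pos[OF w \<gamma>] unfolding lam_w S_def by blast
qed

section \<open>Failure of the error bound\<close>

lemma no_error_bound_at_double_root:
  fixes f D g :: "real \<Rightarrow> real"
  assumes f: "f s0 = 0" "(f has_real_derivative 0) (at s0)"
    and D: "\<And>h. h > 0 \<Longrightarrow> h \<le> D h \<and> D h \<le> C * h"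
    and g: "\<And>h. h > 0 \<Longrightarrow> g h = c * \<bar>f (s0 + h)\<bar>" and c: "c \<ge> 0"
    and \<epsilon>: "\<epsilon> > 0" and \<kappa>: "\<kappa> \<ge> 0"
    and bound: "\<And>h. h > 0 \<Longrightarrow> D h \<le> \<epsilon> \<Longrightarrow> D h \<le> \<kappa> * g h"
  shows False
proof -
  define \<delta> where "\<delta> = 1 / (\<kappa> * c + 1)"
  have \<kappa>c: "\<kappa> * c \<ge> 0" using \<kappa> c by simp
  have \<delta>: "\<delta> > 0" "\<kappa> * c * \<delta> < 1" using \<kappa>c by (auto simp: \<delta>_def field_simps)
  have "((\<lambda>h. (f (s0 + h) - f s0) / h) \<longlongrightarrow> 0) (at_right 0)"
    using DERIV_D[OF f(2)] by (rule tendsto_mono[OF at_le[OF subset_UNIV]])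
  then have "\<forall>\<^sub>F h in at_right 0. dist ((f (s0 + h) - f s0) / h) 0 < \<delta>"
    using \<delta>(1) by (rule tendstoD)
  then have "\<forall>\<^sub>F h in at_right 0. \<bar>f (s0 + h) / h\<bar> < \<delta>"
    using f(1) by (simp add: dist_real_def)
  moreover have "((\<lambda>h. C * h) \<longlongrightarrow> 0) (at_right (0::real))"
    by (auto intro!: tendsto_eq_intros)
  then have "\<forall>\<^sub>F h in at_right 0. C * h < \<epsilon>"
    using \<epsilon> by (rule order_tendstoD)
  moreover have "\<forall>\<^sub>F h in at_right (0::real). h > 0"
    by (simp add: eventually_at_right_less)
  ultimately obtain h where h: "h > 0" "\<bar>f (s0 + h) / h\<bar> < \<delta>" "C * h < \<epsilon>"
    using eventually_happens[OF eventually_conj[OF eventually_conj]] by fastforce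
  have "h \<le> \<kappa> * (c * \<bar>f (s0 + h)\<bar>)"
    using D[OF h(1)] bound[OF h(1)] g[OF h(1)] h(3) by fastforce
  also have "\<dots> \<le> \<kappa> * c * (\<delta> * h)"
  proof -
    have "\<bar>f (s0 + h)\<bar> \<le> \<delta> * h" using h(1,2) by (simp add: pos_divide_less_eq)
    then show ?thesis using mult_left_mono[OF _ \<kappa>c] by (simp add: mult.assoc)
  qed
  also have "\<dots> < h" using \<delta>(2) h(1) by (simp add: mult.assoc[symmetric])
  finally show False by simp
qed
lemma no_error_bound_at_single_vec:
  assumes mid: "\<forall>l\<in>{1..L-1}. d l \<ge> dmin d L" and i: "i < dmin d L" and L3: "L \<ge> 3"
    and "s0 > 0" and root: "crit_poly L lam (y i) s0 = 0"
    and crit: "(crit_poly L lam (y i) has_real_derivative 0) (at s0)"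
  shows "\<not> (\<exists>\<epsilon>>0. \<exists>\<kappa>>0. \<forall>W. valid_tuple d L W \<and>
            tsetdist L W (What d L y (single_vec i s0)) \<le> \<epsilon> \<longrightarrow>
            tsetdist L W (What d L y (single_vec i s0)) \<le> \<kappa> * gradnorm d L lam y W)"
proof
  assume "\<exists>\<epsilon>>0. \<exists>\<kappa>>0. \<forall>W. valid_tuple d L W \<and>
            tsetdist L W (What d L y (single_vec i s0)) \<le> \<epsilon> \<longrightarrow>
            tsetdist L W (What d L y (single_vec i s0)) \<le> \<kappa> * gradnorm d L lam y W"
  then obtain \<epsilon> \<kappa> where "\<epsilon> > 0" "\<kappa> > 0" and bound: "\<forall>W. valid_tuple d L W \<and>
            tsetdist L W (What d L y (single_vec i s0)) \<le> \<epsilon> \<longrightarrow>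
            tsetdist L W (What d L y (single_vec i s0)) \<le> \<kappa> * gradnorm d L lam y W"
    by blast
  have "valid_tuple d L (diag_tuple d L i s)" for s
    unfolding valid_tuple_def using diag_tuple_carrier by blast
  then have bound_on_ray: "tsetdist L (diag_tuple d L i s) (What d L y (single_vec i s0)) \<le> \<epsilon> \<Longrightarrow>
      tsetdist L (diag_tuple d L i s) (What d L y (single_vec i s0))
        \<le> \<kappa> * gradnorm d L lam y (diag_tuple d L i s)" for s
    using bound by blast
  have i_dim: "\<forall>k\<le>L. i < d k" using i dmin_le_dim[OF mid] by (meson less_le_trans)
  note dist = tsetdist_diag_tuple_What[OF mid i L3 less_imp_le[OF \<open>s0 > 0\<close>]]
  show False
    by (rule no_error_bound_at_double_root[OF root crit, where C = "sqrt (real L)" and c = "2 * sqrt (real L)"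
          and D = "\<lambda>h. tsetdist L (diag_tuple d L i (s0 + h)) (What d L y (single_vec i s0))"
          and g = "\<lambda>h. gradnorm d L lam y (diag_tuple d L i (s0 + h))" and \<epsilon> = \<epsilon> and \<kappa> = \<kappa>])
      (use dist gradnorm_diag_tuple[OF i_dim i] L3 bound_on_ray \<open>\<epsilon> > 0\<close> \<open>\<kappa> > 0\<close> in auto)
qed

theorem lemmaA3:
  fixes d :: "nat \<Rightarrow> nat" and L :: nat and lam :: real and y :: "nat \<Rightarrow> real" and i :: nat
  assumes "\<forall>l\<le>L. d l > 0"
    and "lam > 0"
    and "\<forall>k j. k \<le> j \<and> j < dmin d L \<longrightarrow> y j \<le> y k"
    and "\<forall>k < dmin d L. y k \<ge> 0"
    and "L \<ge> 3"
    and "\<forall>l\<in>{1..L-1}. d l \<ge> dmin d L"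
    and "i < rY d L y"
    and "lam = y i powr (2 * (real L - 1)) *
           ((((real L - 2) / real L) powr (real L / (2 * (real L - 1)))
            + (real L / (real L - 2)) powr ((real L - 2) / (2 * (real L - 1))))
            powr (- 2 * (real L - 1)))"
  shows "\<exists>a \<in> Aset d L lam y. \<not> (\<exists>\<epsilon>>0. \<exists>\<kappa>>0. \<forall>W. valid_tuple d L W \<and>
            tsetdist L W (What d L y a) \<le> \<epsilon> \<longrightarrow>
            tsetdist L W (What d L y a) \<le> \<kappa> * gradnorm d L lam y W)"
proof -
  have i: "i < dmin d L" using assms(7) rY_le_dmin[of d L y] by simp
  have "y i > 0"
    using assms(2,4,8) i by (cases "y i = 0") auto
  then obtain s0 where "s0 > 0" and root: "crit_poly L lam (y i) s0 = 0"
    and crit: "(crit_poly L lam (y i) has_real_derivative 0) (at s0)"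
    using crit_poly_has_double_root[OF assms(5) _ assms(8)] by blast
  have "single_vec i s0 \<in> Aset d L lam y"
    using i root \<open>s0 > 0\<close> assms(5)
    by (auto simp: Aset_def single_vec_def crit_poly_def power_0_left)
  then show ?thesis
    using no_error_bound_at_single_vec[where y = y, OF assms(6) i assms(5) \<open>s0 > 0\<close> root crit] by blast
qed

end
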